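(* Let $\mathcal M$ be a local Moufang set with basis $(0,\infty)$ and little projective group $G$, and let $\tau=\mu_e$ for some unit $e$. Then $G=U_0HU_\infty\,\cup\,U_0H\tau U_0^\circ$. Consequently the stabilizer of $0$ in $G$ is $G_0=U_0H$, and the stabilizer of both $0$ and $\infty$ is $G_{0,\infty}=H$.
   Context: Group actions are right actions, written $xg$; conjugation is $g^h=h^{-1}gh$. For a set $X$ with an equivalence relation $\sim$, $\overline{x}$ denotes the class of $x$, $\overline X$ the set of classes, and $\mathrm{Sym}(X,\sim)$ the group of bijections $g$ of $X$ with $x\sim y\iff xg\sim yg$; each such $g$ induces a permutation $\overline g$ of $\overline X$, and for a subgroup $U\le \mathrm{Sym}(X,\sim)$, $\overline U$ is the induced group of permutations of $\overline X$. A local Moufang set consists of a set with equivalence relation $(X,\sim)$ with $|\overline X|>2$ and, for each $x\in X$, a subgroup (root group) $U_x\le\mathrm{Sym}(X,\sim)$ such that: (LM0) if $x\sim y$ then $\overline{U_x}=\overline{U_y}$; (LM1) $U_x$ fixes $x$ and acts sharply transitively on $X\setminus\overline x$; (LM1') $\overline{U_x}$ fixes $\overline x$ and acts sharply transitively on $\overline X\setminus\{\overline x\}$; (LM2) $U_x^g=U_{xg}$ for all $x\in X$ and all $g$ in the little projective group $G:=\langle U_x\mid x\in X\rangle$. A basis is a fixed pair $(0,\infty)$ with $0\not\sim\infty$. For $x\not\sim\infty$, $\alpha_x$ is the unique element of $U_\infty$ with $0\alpha_x=x$. A unit is $x\in X$ with $x\not\sim0$, $x\not\sim\infty$; for a unit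 $x$, $\mu_x$ is the unique element of $U_0\alpha_xU_0$ interchanging $0$ and $\infty$. The Hua subgroup is $H:=\langle\mu_x\mu_y\mid x,y\text{ units}\rangle$. $U_0^\circ:=\{u\in U_0\mid \overline u=\mathrm{id}_{\overline X}\}$. *)

theory Defs
  imports Main
begin

text \<open>The set X is the universe of the type 'a; permutations are
functions 'a \<Rightarrow> 'a. Groups act on the right: x(gh) = (xg)h, so the product
gh of permutations is the function h \<circ> g.\<close>

definition pmul :: "('a \<Rightarrow> 'a) \<Rightarrow> ('a \<Rightarrow> 'a) \<Rightarrow> ('a \<Rightarrow> 'a)" where
  "pmul g h = h \<circ> g"

definition setmul :: "('a \<Rightarrow> 'a) set \<Rightarrow> ('a \<Rightarrow> 'a) set \<Rightarrow> ('a \<Rightarrow> 'a) set" where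
  "setmul A B = {pmul a b | a b. a \<in> A \<and> b \<in> B}"

definition SymE :: "('a \<Rightarrow> 'a \<Rightarrow> bool) \<Rightarrow> ('a \<Rightarrow> 'a) set" where
  "SymE E = {g. bij g \<and> (\<forall>x y. E x y \<longleftrightarrow> E (g x) (g y))}"

definition cls :: "('a \<Rightarrow> 'a \<Rightarrow> bool) \<Rightarrow> 'a \<Rightarrow> 'a set" where
  "cls E x = {y. E x y}"

definition classes :: "('a \<Rightarrow> 'a \<Rightarrow> bool) \<Rightarrow> 'a set set" where
  "classes E = range (cls E)"

definition ind :: "('a \<Rightarrow> 'a \<Rightarrow> bool) \<Rightarrow> ('a \<Rightarrow> 'a) \<Rightarrow> ('a set \<Rightarrow> 'a set)" where
  "ind E g = (\<lambda>C. if C \<in> classes E then g ` C else C)"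

definition is_subgroup :: "('a \<Rightarrow> 'a) set \<Rightarrow> bool" where
  "is_subgroup U \<longleftrightarrow> (\<forall>g\<in>U. bij g) \<and> id \<in> U \<and> (\<forall>g\<in>U. \<forall>h\<in>U. pmul g h \<in> U)
     \<and> (\<forall>g\<in>U. inv g \<in> U)"

inductive_set gen_group :: "('a \<Rightarrow> 'a) set \<Rightarrow> ('a \<Rightarrow> 'a) set" for S where
  gen_id: "id \<in> gen_group S"
| gen_elem: "g \<in> S \<Longrightarrow> g \<in> gen_group S"
| gen_inv: "g \<in> S \<Longrightarrow> inv g \<in> gen_group S"
| gen_mul: "g \<in> gen_group S \<Longrightarrow> h \<in> gen_group S \<Longrightarrow> pmul g h \<in> gen_group S"

definition littleG :: "('a \<Rightarrow> ('a \<Rightarrow> 'a) set) \<Rightarrow> ('a \<Rightarrow> 'a) set" where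
  "littleG U = gen_group (\<Union>x. U x)"

text \<open>Conjugation u^g = g^{-1} u g (right action), i.e. the function g \<circ> u \<circ> g^{-1}.\<close>
definition conj :: "('a \<Rightarrow> 'a) \<Rightarrow> ('a \<Rightarrow> 'a) \<Rightarrow> ('a \<Rightarrow> 'a)" where
  "conj u g = pmul (pmul (inv g) u) g"

definition local_moufang_set :: "('a \<Rightarrow> 'a \<Rightarrow> bool) \<Rightarrow> ('a \<Rightarrow> ('a \<Rightarrow> 'a) set) \<Rightarrow> bool" where
  "local_moufang_set E U \<longleftrightarrow>
     equivp E
   \<and> (\<exists>a b c. \<not> E a b \<and> \<not> E a c \<and> \<not> E b c)
   \<and> (\<forall>x. is_subgroup (U x) \<and> U x \<subseteq> SymE E)
   \<comment> \<open>LM0\<close>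
   \<and> (\<forall>x y. E x y \<longrightarrow> ind E ` U x = ind E ` U y)
   \<comment> \<open>LM1\<close>
   \<and> (\<forall>x. (\<forall>u\<in>U x. u x = x)
         \<and> (\<forall>y z. \<not> E x y \<longrightarrow> \<not> E x z \<longrightarrow> (\<exists>!u. u \<in> U x \<and> u y = z)))
   \<comment> \<open>LM1'\<close>
   \<and> (\<forall>x. (\<forall>p\<in>ind E ` U x. p (cls E x) = cls E x)
         \<and> (\<forall>C\<in>classes E. \<forall>D\<in>classes E. C \<noteq> cls E x \<longrightarrow> D \<noteq> cls E x \<longrightarrow>
              (\<exists>!p. p \<in> ind E ` U x \<and> p C = D)))
   \<comment> \<open>LM2\<close>
   \<and> (\<forall>x. \<forall>g\<in>littleG U. U (g x) = (\<lambda>u. conj u g) ` U x)"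

definition alpha :: "('a \<Rightarrow> ('a \<Rightarrow> 'a) set) \<Rightarrow> 'a \<Rightarrow> 'a \<Rightarrow> 'a \<Rightarrow> ('a \<Rightarrow> 'a)" where
  "alpha U zero infty x = (THE u. u \<in> U infty \<and> u zero = x)"

definition is_unit :: "('a \<Rightarrow> 'a \<Rightarrow> bool) \<Rightarrow> 'a \<Rightarrow> 'a \<Rightarrow> 'a \<Rightarrow> bool" where
  "is_unit E zero infty x \<longleftrightarrow> \<not> E x zero \<and> \<not> E x infty"

definition mu :: "('a \<Rightarrow> ('a \<Rightarrow> 'a) set) \<Rightarrow> 'a \<Rightarrow> 'a \<Rightarrow> 'a \<Rightarrow> ('a \<Rightarrow> 'a)" where
  "mu U zero infty x = (THE m. m \<in> setmul (setmul (U zero) {alpha U zero infty x}) (U zero)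
                         \<and> m zero = infty \<and> m infty = zero)"

definition Hua :: "('a \<Rightarrow> 'a \<Rightarrow> bool) \<Rightarrow> ('a \<Rightarrow> ('a \<Rightarrow> 'a) set) \<Rightarrow> 'a \<Rightarrow> 'a \<Rightarrow> ('a \<Rightarrow> 'a) set" where
  "Hua E U zero infty = gen_group {pmul (mu U zero infty x) (mu U zero infty y) | x y.
        is_unit E zero infty x \<and> is_unit E zero infty y}"

definition Ucirc :: "('a \<Rightarrow> 'a \<Rightarrow> bool) \<Rightarrow> ('a \<Rightarrow> ('a \<Rightarrow> 'a) set) \<Rightarrow> 'a \<Rightarrow> ('a \<Rightarrow> 'a) set" where
  "Ucirc E U zero = {u \<in> U zero. ind E u = id}"

end

theory Submission
  imports Defs
begin

(* Let B = U_0 H; it is a group because H fixes 0 and therefore normalizes U_0. The union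
   B U_\<infinity> \<union> B \<tau> U_0\<degree> contains 1 and is stable under left multiplication by \<tau>, U_0 and
   U_\<infinity>; every root group is conjugate to U_0 or U_\<infinity> by an element of U_\<infinity> or U_0, so the
   union is stable under G and equals G. The crux is that U_0 U_\<infinity> lies in the union. An
   element v of U_\<infinity> with v(0) outside the class of 0 equals a \<mu>_{v(0)} b with a, b \<in> U_0, and
   products \<mu>_x \<mu>_y lie in H. When v(0) lies in the class of 0, u v (u \<in> U_0) is rewritten
   with \<mu>_x for x = u\<inverse>(\<infinity>), and \<tau> v \<tau>\<inverse> lies in U_0\<degree> by LM1'. Sharp transitivity of
   U_0 and U_\<infinity> then identifies the stabilizers of 0 and of both 0 and \<infinity>. *)

section \<open>Groups generated by bijections\<close>

lemma mem_setmul_iff: "g \<in> setmul A B \<longleftrightarrow> (\<exists>a\<in>A. \<exists>b\<in>B. g = b \<circ> a)"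
  by (auto simp: setmul_def pmul_def)

lemma setmulI: "a \<in> A \<Longrightarrow> b \<in> B \<Longrightarrow> b \<circ> a \<in> setmul A B"
  by (auto simp: mem_setmul_iff)

lemma setmulE:
  assumes "g \<in> setmul A B"
  obtains a b where "a \<in> A" "b \<in> B" "g = b \<circ> a"
  using assms by (auto simp: mem_setmul_iff)

lemma bij_inv_apply [simp]: "bij f \<Longrightarrow> inv f (f x) = x"
  by (simp add: bij_is_inj)

lemma bij_apply_inv [simp]: "bij f \<Longrightarrow> f (inv f x) = x"
  by (simp add: bij_is_surj surj_f_inv_f)

lemma gen_group_bij:
  assumes "\<forall>g\<in>S. bij g" and "g \<in> gen_group S"
  shows "bij g"
  using assms(2)
proof induct
  case (gen_mul g h)
  then show ?case unfolding pmul_def by (metis bij_comp)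
qed (use assms(1) bij_imp_bij_inv bij_id in blast)+

lemma gen_group_inv:
  assumes "\<forall>g\<in>S. bij g" and "g \<in> gen_group S"
  shows "inv g \<in> gen_group S"
  using assms(2)
proof induct
  case gen_id
  then show ?case by (metis inv_id gen_group.gen_id)
next
  case (gen_elem g)
  then show ?case by (rule gen_group.gen_inv)
next
  case (gen_inv g)
  then show ?case using assms(1) by (simp add: inv_inv_eq gen_group.gen_elem)
next
  case (gen_mul g h)
  have "bij g" "bij h" using gen_mul assms(1) gen_group_bij by blast+
  then have "inv (pmul g h) = pmul (inv h) (inv g)" by (simp add: pmul_def o_inv_distrib)
  then show ?case using gen_mul by (simp add: gen_group.gen_mul)
qed

lemma gen_group_left_closed:
  assumes "\<And>g t. g \<in> S \<Longrightarrow> t \<in> T \<Longrightarrow> g \<circ> t \<in> T"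
    and "\<And>g t. g \<in> S \<Longrightarrow> t \<in> T \<Longrightarrow> inv g \<circ> t \<in> T"
    and "g \<in> gen_group S" and "t \<in> T"
  shows "g \<circ> t \<in> T"
  using assms(3,4) by (induct arbitrary: t) (auto simp: pmul_def assms(1,2) o_assoc[symmetric])

lemma SymE_inv:
  assumes "g \<in> SymE E"
  shows "inv g \<in> SymE E"
proof -
  have g: "bij g" "\<And>x y. E x y \<longleftrightarrow> E (g x) (g y)" using assms by (auto simp: SymE_def)
  have "E x y \<longleftrightarrow> E (inv g x) (inv g y)" for x y
    using g(2)[of "inv g x" "inv g y"] g(1) by simp
  then show ?thesis using g(1) by (simp add: SymE_def bij_imp_bij_inv)
qed

lemma gen_group_SymE:
  assumes "S \<subseteq> SymE E" and "g \<in> gen_group S"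
  shows "g \<in> SymE E"
  using assms(2)
proof induct
  case gen_id
  show ?case by (simp add: SymE_def bij_id[unfolded id_def])
next
  case (gen_elem g)
  then show ?case using assms(1) by blast
next
  case (gen_inv g)
  then show ?case using assms(1) SymE_inv by blast
next
  case (gen_mul g h)
  then show ?case unfolding SymE_def pmul_def by (auto intro: bij_comp[unfolded comp_def])
qed

lemma gen_group_fixes:
  assumes "\<forall>g\<in>S. bij g \<and> g x = x" and "g \<in> gen_group S"
  shows "g x = x"
  using assms(2)
proof induct
  case (gen_inv g)
  then show ?case using assms(1) by (metis bij_inv_apply)
qed (use assms(1) in \<open>auto simp: pmul_def\<close>)

lemma gen_group_subset:
  assumes "S \<subseteq> gen_group T" and "\<forall>g\<in>T. bij g"
  shows "gen_group S \<subseteq> gen_group T"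
proof
  fix g assume "g \<in> gen_group S"
  then show "g \<in> gen_group T"
  proof induct
    case gen_id
    show ?case by (rule gen_group.gen_id)
  qed (use assms gen_group_inv in \<open>auto intro: gen_group.gen_mul\<close>)
qed

lemma SymE_image_cls:
  assumes "g \<in> SymE E"
  shows "g ` cls E y = cls E (g y)"
proof -
  have g: "bij g" "\<And>a b. E a b \<longleftrightarrow> E (g a) (g b)" using assms by (auto simp: SymE_def)
  have "s \<in> g ` cls E y" if "E (g y) s" for s
    using that g(1) g(2)[of y "inv g s"] by (intro image_eqI[of _ _ "inv g s"]) (auto simp: cls_def)
  then show ?thesis using g(2) by (auto simp: cls_def)
qed

section \<open>Root groups of a local Moufang set with a basis\<close>

locale local_moufang_basis =
  fixes E :: "'a \<Rightarrow> 'a \<Rightarrow> bool" and U :: "'a \<Rightarrow> ('a \<Rightarrow> 'a) set" and zero infty :: 'a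
  assumes local_moufang: "local_moufang_set E U"
    and basis: "\<not> E zero infty"
begin

abbreviation "G \<equiv> littleG U"
abbreviation "H \<equiv> Hua E U zero infty"
abbreviation "\<alpha> \<equiv> alpha U zero infty"
abbreviation "\<mu> \<equiv> mu U zero infty"
abbreviation "unit x \<equiv> is_unit E zero infty x"

lemma
  shows equivp_E: "equivp E"
    and root_subgroup: "is_subgroup (U x)"
    and root_SymE: "U x \<subseteq> SymE E"
    and root_fixes: "u \<in> U x \<Longrightarrow> u x = x"
    and root_sharply_transitive: "\<not> E x y \<Longrightarrow> \<not> E x w \<Longrightarrow> \<exists>!u. u \<in> U x \<and> u y = w"
    and induced_sharply_transitive: "C \<in> classes E \<Longrightarrow> D \<in> classes E \<Longrightarrow>
          C \<noteq> cls E x \<Longrightarrow> D \<noteq> cls E x \<Longrightarrow> \<exists>!p. p \<in> ind E ` U x \<and> p C = D"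
    and root_conj: "g \<in> G \<Longrightarrow> U (g x) = (\<lambda>u. conj u g) ` U x"
proof -
  note lms = local_moufang[unfolded local_moufang_set_def]
  note subgroups = lms[THEN conjunct2, THEN conjunct2, THEN conjunct1, rule_format, of x]
  note lm1 = lms[THEN conjunct2, THEN conjunct2, THEN conjunct2, THEN conjunct2, THEN conjunct1,
      rule_format, of x]
  note lm1' = lms[THEN conjunct2, THEN conjunct2, THEN conjunct2, THEN conjunct2, THEN conjunct2,
      THEN conjunct1, rule_format, of x, THEN conjunct2, rule_format]
  note lm2 = lms[THEN conjunct2, THEN conjunct2, THEN conjunct2, THEN conjunct2, THEN conjunct2,
      THEN conjunct2, rule_format]
  show "equivp E" by (rule lms[THEN conjunct1])
  show "is_subgroup (U x)" "U x \<subseteq> SymE E" using subgroups by simp_all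
  show "u \<in> U x \<Longrightarrow> u x = x" using lm1 by simp
  show "\<not> E x y \<Longrightarrow> \<not> E x w \<Longrightarrow> \<exists>!u. u \<in> U x \<and> u y = w"
    using lm1[THEN conjunct2, rule_format] .
  show "C \<in> classes E \<Longrightarrow> D \<in> classes E \<Longrightarrow> C \<noteq> cls E x \<Longrightarrow> D \<noteq> cls E x \<Longrightarrow>
      \<exists>!p. p \<in> ind E ` U x \<and> p C = D"
    by (rule lm1')
  show "g \<in> G \<Longrightarrow> U (g x) = (\<lambda>u. conj u g) ` U x" by (rule lm2)
qed

lemma E_refl [simp]: "E x x"
  using equivp_E equivp_reflp by metis

lemma E_sym: "E x y \<Longrightarrow> E y x"
  using equivp_E equivp_symp by metis

lemma E_trans: "E x y \<Longrightarrow> E y w \<Longrightarrow> E x w"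
  using equivp_E equivp_transp by metis

lemma infty_not_E_zero: "\<not> E infty zero"
  using basis E_sym by blast

lemma root_bij: "u \<in> U x \<Longrightarrow> bij u"
  using root_subgroup unfolding is_subgroup_def by blast

lemma root_preserves_E: "u \<in> U x \<Longrightarrow> E a b \<longleftrightarrow> E (u a) (u b)"
  using root_SymE unfolding SymE_def by blast

lemma root_id [simp]: "id \<in> U x"
  using root_subgroup unfolding is_subgroup_def by blast

lemma root_comp: "u \<in> U x \<Longrightarrow> v \<in> U x \<Longrightarrow> v \<circ> u \<in> U x"
  using root_subgroup unfolding is_subgroup_def pmul_def by blast

lemma root_inv: "u \<in> U x \<Longrightarrow> inv u \<in> U x"
  using root_subgroup unfolding is_subgroup_def by blast

lemma root_not_E_image:
  assumes "u \<in> U x" and "\<not> E x y"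
  shows "\<not> E x (u y)"
  using root_preserves_E[OF assms(1), of x y] root_fixes[OF assms(1)] assms(2) by simp

lemma root_eqI:
  assumes "\<not> E x y" and "u \<in> U x" and "u' \<in> U x" and "u y = u' y"
  shows "u = u'"
proof -
  have "\<exists>!w. w \<in> U x \<and> w y = u y"
    using root_sharply_transitive[OF assms(1) root_not_E_image[OF assms(2,1)]] .
  then show ?thesis using assms(2-4) by (metis (mono_tags, lifting))
qed

lemma root_in_G: "u \<in> U x \<Longrightarrow> u \<in> G"
  unfolding littleG_def by (auto intro: gen_group.gen_elem)

lemma G_comp: "g \<in> G \<Longrightarrow> h \<in> G \<Longrightarrow> h \<circ> g \<in> G"
  unfolding littleG_def by (metis gen_group.gen_mul pmul_def)

lemma roots_bij: "\<forall>g\<in>(\<Union>x. U x). bij g"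
  using root_bij by blast

lemma G_inv: "g \<in> G \<Longrightarrow> inv g \<in> G"
  unfolding littleG_def using gen_group_inv roots_bij by blast

lemma G_bij: "g \<in> G \<Longrightarrow> bij g"
  unfolding littleG_def using gen_group_bij roots_bij by blast

lemma G_preserves_E: "g \<in> G \<Longrightarrow> E a b \<longleftrightarrow> E (g a) (g b)"
  using gen_group_SymE[of "\<Union>x. U x" E g] root_SymE unfolding littleG_def SymE_def by blast

lemma conj_root:
  assumes "g \<in> G" and "g x = y" and "u \<in> U x"
  shows "g \<circ> u \<circ> inv g \<in> U y"
  using root_conj[OF assms(1), of x] assms(2,3) by (auto simp: conj_def pmul_def comp_assoc)

lemma conj_root_inv:
  assumes "g \<in> G" and "g y = x" and "u \<in> U x"
  shows "inv g \<circ> u \<circ> g \<in> U y"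
proof -
  have "bij g" using G_bij assms(1) by blast
  then have "inv g x = y" using assms(2) by auto
  then show ?thesis
    using conj_root[OF G_inv[OF assms(1)] _ assms(3)] \<open>bij g\<close> by (simp add: inv_inv_eq)
qed

section \<open>The maps \<alpha> and \<mu>\<close>

lemma alpha_spec:
  assumes "\<not> E x infty"
  shows "\<alpha> x \<in> U infty" and "\<alpha> x zero = x"
proof -
  have "\<exists>!u. u \<in> U infty \<and> u zero = x"
    using root_sharply_transitive infty_not_E_zero assms E_sym by blast
  then have "\<alpha> x \<in> U infty \<and> \<alpha> x zero = x" unfolding alpha_def by (rule theI')
  then show "\<alpha> x \<in> U infty" and "\<alpha> x zero = x" by simp_all
qed

lemma alpha_root_infty: "v \<in> U infty \<Longrightarrow> \<alpha> (v zero) = v"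
  unfolding alpha_def
  using root_sharply_transitive[OF infty_not_E_zero root_not_E_image[OF _ infty_not_E_zero]]
  by (intro the1_equality) auto

lemma unit_root_infty:
  assumes "v \<in> U infty" and "\<not> E (v zero) zero"
  shows "unit (v zero)"
  using root_not_E_image[OF assms(1) infty_not_E_zero] assms(2) E_sym by (auto simp: is_unit_def)

lemma double_coset_eqI:
  assumes "a \<in> U zero" "b \<in> U zero" "a' \<in> U zero" "b' \<in> U zero"
    and "bij A" and "\<not> E zero (A zero)"
    and "(b \<circ> A \<circ> a) zero = (b' \<circ> A \<circ> a') zero" and "(b \<circ> A \<circ> a) infty = (b' \<circ> A \<circ> a') infty"
  shows "b \<circ> A \<circ> a = b' \<circ> A \<circ> a'"
proof -
  have "b (A zero) = b' (A zero)" using assms(7) root_fixes[OF assms(1)] root_fixes[OF assms(3)] by simp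
  then have b: "b = b'" using root_eqI assms(2,4,6) by blast
  then have "A (a infty) = A (a' infty)" using assms(8) root_bij[OF assms(2)] by (simp add: bij_is_inj inj_eq)
  then have "a infty = a' infty" using assms(5) by (simp add: bij_is_inj inj_eq)
  then have "a = a'" using root_eqI basis assms(1,3) by blast
  then show ?thesis using b by simp
qed

lemma swap_in_double_coset:
  assumes "unit x"
  obtains a b where "a \<in> U zero" "b \<in> U zero"
    "(b \<circ> \<alpha> x \<circ> a) zero = infty" "(b \<circ> \<alpha> x \<circ> a) infty = zero"
proof -
  have x: "\<not> E zero x" "\<not> E x infty" using assms E_sym by (auto simp: is_unit_def)
  note A = alpha_spec[OF x(2)]
  obtain b where b: "b \<in> U zero" "b x = infty" using root_sharply_transitive[OF x(1) basis] by blast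
  define y where "y = inv (\<alpha> x) zero"
  have "\<not> E zero y"
  proof
    assume "E zero y"
    then have "E (\<alpha> x zero) (\<alpha> x y)" using root_preserves_E[OF A(1)] by blast
    then show False using x(1) A(2) root_bij[OF A(1)] by (simp add: y_def E_sym)
  qed
  then obtain a where a: "a \<in> U zero" "a infty = y" using root_sharply_transitive[OF basis] by blast
  show thesis
    using that[OF a(1) b(1)] root_fixes[OF a(1)] root_fixes[OF b(1)] A(2) b(2) a(2)
      root_bij[OF A(1)] by (simp add: y_def)
qed

lemma mu_spec:
  assumes "unit x"
  obtains a b where "a \<in> U zero" "b \<in> U zero" "\<mu> x = b \<circ> \<alpha> x \<circ> a"
    and "\<mu> x zero = infty" "\<mu> x infty = zero"
proof -
  obtain a b where ab: "a \<in> U zero" "b \<in> U zero"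
    "(b \<circ> \<alpha> x \<circ> a) zero = infty" "(b \<circ> \<alpha> x \<circ> a) infty = zero"
    using swap_in_double_coset[OF assms] .
  have x: "\<not> E x infty" "\<not> E zero x" using assms E_sym by (auto simp: is_unit_def)
  have A: "bij (\<alpha> x)" "\<not> E zero (\<alpha> x zero)"
    using alpha_spec[OF x(1)] root_bij x(2) by auto
  let ?P = "\<lambda>m. m \<in> setmul (setmul (U zero) {\<alpha> x}) (U zero) \<and> m zero = infty \<and> m infty = zero"
  have "?P (b \<circ> \<alpha> x \<circ> a)" using ab by (auto simp: mem_setmul_iff comp_assoc intro!: bexI)
  moreover have "m = b \<circ> \<alpha> x \<circ> a" if m: "?P m" for m
  proof -
    obtain a' b' where "a' \<in> U zero" "b' \<in> U zero" "m = b' \<circ> \<alpha> x \<circ> a'"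
      using m by (auto simp: mem_setmul_iff comp_assoc)
    then show ?thesis using double_coset_eqI[OF ab(1,2) _ _ A] m ab(3,4) by metis
  qed
  ultimately have "\<mu> x = b \<circ> \<alpha> x \<circ> a" unfolding mu_def by (rule the_equality)
  then show thesis using that ab by simp
qed

lemma mu_swaps:
  assumes "unit x"
  shows "\<mu> x zero = infty" and "\<mu> x infty = zero"
  using mu_spec[OF assms] by metis+

lemma mu_in_G: "unit x \<Longrightarrow> \<mu> x \<in> G"
  using mu_spec alpha_spec root_in_G G_comp by (metis is_unit_def)

lemma mu_bij: "unit x \<Longrightarrow> bij (\<mu> x)"
  using mu_in_G G_bij by blast

lemma mu_eq_root_alpha_root:
  assumes "unit x" and "u \<in> U zero" and "u x = infty"
  obtains p where "p \<in> U zero" and "\<mu> x = u \<circ> \<alpha> x \<circ> p"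
proof -
  obtain a b where ab: "a \<in> U zero" "b \<in> U zero" "\<mu> x = b \<circ> \<alpha> x \<circ> a" "\<mu> x zero = infty"
    using mu_spec[OF assms(1)] by metis
  have x: "\<not> E x infty" "\<not> E zero x" using assms(1) E_sym by (auto simp: is_unit_def)
  have "b x = u x" using ab root_fixes[OF ab(1)] alpha_spec(2)[OF x(1)] assms(3) by simp
  then have "b = u" using root_eqI[OF x(2) ab(2) assms(2)] by simp
  then show thesis using that ab by simp
qed

lemma root_infty_eq_root_mu_root:
  assumes "v \<in> U infty" and "v zero = x" and "\<not> E x zero"
  obtains a b where "a \<in> U zero" "b \<in> U zero" "v = b \<circ> \<mu> x \<circ> a"
proof -
  obtain a b where ab: "a \<in> U zero" "b \<in> U zero" "\<mu> x = b \<circ> v \<circ> a"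
    using mu_spec[OF unit_root_infty[OF assms(1)]] alpha_root_infty[OF assms(1)] assms(2,3) by metis
  have "v = inv b \<circ> \<mu> x \<circ> inv a"
    using ab(3) root_bij[OF ab(1)] root_bij[OF ab(2)] by (simp add: fun_eq_iff)
  then show thesis using that root_inv ab(1,2) by blast
qed

section \<open>The Hua subgroup and the stabilizer of 0\<close>

lemma Hua_mu_mu: "unit x \<Longrightarrow> unit y \<Longrightarrow> \<mu> y \<circ> \<mu> x \<in> H"
  unfolding Hua_def pmul_def by (rule gen_group.gen_elem) blast

lemma Hua_generators_bij: "\<forall>g\<in>{pmul (\<mu> x) (\<mu> y) | x y. unit x \<and> unit y}. bij g"
proof
  fix g assume "g \<in> {pmul (\<mu> x) (\<mu> y) | x y. unit x \<and> unit y}"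
  then obtain x y where "g = \<mu> y \<circ> \<mu> x" "unit x" "unit y" by (auto simp: pmul_def)
  then show "bij g" using mu_bij bij_comp by metis
qed

lemma Hua_id: "id \<in> H"
  unfolding Hua_def by (rule gen_group.gen_id)

lemma Hua_comp: "h \<in> H \<Longrightarrow> g \<in> H \<Longrightarrow> g \<circ> h \<in> H"
  unfolding Hua_def using gen_group.gen_mul[of h _ g] by (simp add: pmul_def)

lemma Hua_inv: "h \<in> H \<Longrightarrow> inv h \<in> H"
  unfolding Hua_def using gen_group_inv Hua_generators_bij by blast

lemma Hua_subset_G: "H \<subseteq> G"
  unfolding Hua_def littleG_def
proof (rule gen_group_subset)
  show "{pmul (\<mu> x) (\<mu> y) | x y. unit x \<and> unit y} \<subseteq> gen_group (\<Union>x. U x)"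
    using mu_in_G G_comp unfolding littleG_def pmul_def by blast
qed (rule roots_bij)

lemma Hua_fixes:
  assumes "h \<in> H"
  shows "h zero = zero" and "h infty = infty"
proof -
  let ?S = "{pmul (\<mu> x) (\<mu> y) | x y. unit x \<and> unit y}"
  have "g zero = zero \<and> g infty = infty" if g: "g \<in> ?S" for g
  proof -
    obtain x y where "g = \<mu> y \<circ> \<mu> x" "unit x" "unit y" using g by (auto simp: pmul_def)
    then show ?thesis by (simp add: mu_swaps)
  qed
  then have "\<forall>g\<in>?S. bij g \<and> g zero = zero" "\<forall>g\<in>?S. bij g \<and> g infty = infty"
    using Hua_generators_bij by simp_all
  then show "h zero = zero" "h infty = infty"
    using gen_group_fixes[OF _ assms[unfolded Hua_def]] by blast+
qed

lemma Hua_bij: "h \<in> H \<Longrightarrow> bij h"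
  using Hua_subset_G G_bij by blast

lemma Hua_normalizes_root_zero: "h \<in> H \<Longrightarrow> a \<in> U zero \<Longrightarrow> inv h \<circ> a \<circ> h \<in> U zero"
  using conj_root_inv[of h zero zero a] Hua_subset_G Hua_fixes(1) by blast

definition B :: "('a \<Rightarrow> 'a) set" where
  "B = setmul (U zero) H"

lemma mem_B_iff: "b \<in> B \<longleftrightarrow> (\<exists>a\<in>U zero. \<exists>h\<in>H. b = h \<circ> a)"
  by (simp add: B_def mem_setmul_iff)

lemma B_comp:
  assumes "b \<in> B" and "b' \<in> B"
  shows "b' \<circ> b \<in> B"
proof -
  obtain a h where 1: "a \<in> U zero" "h \<in> H" "b = h \<circ> a" using assms(1) mem_B_iff by blast
  obtain a' h' where 2: "a' \<in> U zero" "h' \<in> H" "b' = h' \<circ> a'" using assms(2) mem_B_iff by blast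
  have "b' \<circ> b = (h' \<circ> h) \<circ> ((inv h \<circ> a' \<circ> h) \<circ> a)"
    using 1 2 Hua_bij[OF 1(2)] by (simp add: fun_eq_iff)
  moreover have "(inv h \<circ> a' \<circ> h) \<circ> a \<in> U zero"
    using Hua_normalizes_root_zero 1 2 root_comp by blast
  ultimately show ?thesis using Hua_comp 1 2 mem_B_iff by blast
qed

lemma root_zero_subset_B: "U zero \<subseteq> B"
proof
  fix a assume "a \<in> U zero"
  then show "a \<in> B" using Hua_id mem_B_iff[of a] by (metis id_comp)
qed

lemma Hua_subset_B: "H \<subseteq> B"
proof
  fix h assume "h \<in> H"
  then show "h \<in> B" using root_id mem_B_iff[of h] by (metis comp_id)
qed

lemma id_in_B: "id \<in> B"
  using root_zero_subset_B root_id by blast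

lemma B_subset_G: "B \<subseteq> G"
proof
  fix b assume "b \<in> B"
  then obtain a h where "a \<in> U zero" "h \<in> H" "b = h \<circ> a" using mem_B_iff by blast
  then show "b \<in> G" using Hua_subset_G root_in_G G_comp by blast
qed

lemma B_fixes_zero:
  assumes "b \<in> B"
  shows "b zero = zero"
proof -
  obtain a h where "a \<in> U zero" "h \<in> H" "b = h \<circ> a" using assms mem_B_iff by blast
  then show ?thesis using Hua_fixes(1)[of h] root_fixes[of a zero] by simp
qed

lemma Ucirc_intro:
  assumes "w \<in> U zero" and "E (w infty) infty"
  shows "w \<in> Ucirc E U zero"
proof -
  have C: "cls E infty \<in> classes E" "cls E infty \<noteq> cls E zero"
    using basis by (auto simp: classes_def cls_def)
  have "cls E (w infty) = cls E infty"
    using assms(2) E_sym E_trans unfolding cls_def by blast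
  then have "ind E w (cls E infty) = cls E infty"
    using C(1) SymE_image_cls[of w E infty] root_SymE assms(1) by (auto simp: ind_def)
  moreover have "ind E id (cls E infty) = cls E infty" using C(1) by (simp add: ind_def)
  ultimately have "ind E w = ind E id"
    using induced_sharply_transitive[OF C(1) C(1) C(2) C(2)] assms(1) root_id by blast
  moreover have "ind E id = id" by (auto simp: ind_def fun_eq_iff)
  ultimately show ?thesis using assms(1) by (simp add: Ucirc_def)
qed

lemma root_zero_root_infty_in_big_cell:
  assumes u: "u \<in> U zero" and v: "v \<in> U infty"
    and v_zero: "E (v zero) zero" and u_infty: "\<not> E (inv u infty) infty"
  shows "u \<circ> v \<in> setmul B (U infty)"
proof -
  (* For x = u\<inverse>(\<infinity>), u \<circ> \<alpha>_x is \<mu>_x up to U_0, and \<alpha>_x\<inverse> \<circ> v moves 0 out of its class. *)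
  define x where "x = inv u infty"
  have ux: "u x = infty" using root_bij[OF u] by (simp add: x_def)
  have "\<not> E x zero"
  proof
    assume "E x zero"
    then have "E (u x) (u zero)" using root_preserves_E[OF u] by blast
    then show False using ux root_fixes[OF u] infty_not_E_zero by simp
  qed
  then have x: "unit x" using u_infty by (simp add: x_def is_unit_def)
  note A = alpha_spec[OF u_infty[folded x_def]]
  obtain p where p: "p \<in> U zero" "\<mu> x = u \<circ> \<alpha> x \<circ> p"
    using mu_eq_root_alpha_root[OF x u ux] .
  define v' where "v' = inv (\<alpha> x) \<circ> v"
  have v': "v' \<in> U infty" using root_comp root_inv A(1) v by (simp add: v'_def)
  define y where "y = v' zero"
  have "\<not> E y zero"
  proof
    assume "E y zero"
    then have "E (\<alpha> x y) (\<alpha> x zero)" using root_preserves_E[OF A(1)] by blast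
    then have "E (v zero) x" using A(2) root_bij[OF A(1)] by (simp add: y_def v'_def)
    then show False using v_zero \<open>\<not> E x zero\<close> E_sym E_trans by blast
  qed
  then obtain a b where ab: "a \<in> U zero" "b \<in> U zero" "v' = b \<circ> \<mu> y \<circ> a"
    using root_infty_eq_root_mu_root[OF v' y_def[symmetric]] by metis
  have "u \<circ> v = (\<mu> x \<circ> (inv p \<circ> b) \<circ> inv (\<mu> x)) \<circ> ((\<mu> x \<circ> \<mu> y) \<circ> a)"
  proof
    fix t
    have "(u \<circ> v) t = u (\<alpha> x (v' t))" using root_bij[OF A(1)] by (simp add: v'_def)
    also have "\<dots> = \<mu> x (inv p (v' t))" using p(2) root_bij[OF p(1)] by simp
    also have "\<dots> = ((\<mu> x \<circ> (inv p \<circ> b) \<circ> inv (\<mu> x)) \<circ> ((\<mu> x \<circ> \<mu> y) \<circ> a)) t"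
      using fun_cong[OF ab(3), of t] mu_bij[OF x] by simp
    finally show "(u \<circ> v) t = ((\<mu> x \<circ> (inv p \<circ> b) \<circ> inv (\<mu> x)) \<circ> ((\<mu> x \<circ> \<mu> y) \<circ> a)) t" .
  qed
  moreover have "\<mu> x \<circ> (inv p \<circ> b) \<circ> inv (\<mu> x) \<in> U infty"
    using conj_root[OF mu_in_G[OF x] mu_swaps(1)[OF x]] root_comp root_inv p(1) ab(2) by blast
  moreover have "(\<mu> x \<circ> \<mu> y) \<circ> a \<in> B"
  proof -
    have "unit y" using unit_root_infty[OF v'] \<open>\<not> E y zero\<close> by (simp add: y_def)
    then show ?thesis using Hua_mu_mu[OF _ x] ab(1) mem_B_iff by blast
  qed
  ultimately show ?thesis by (auto simp: mem_setmul_iff)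
qed

end

section \<open>The Bruhat decomposition\<close>

locale local_moufang_basis_unit = local_moufang_basis +
  fixes e :: 'a
  assumes unit_e: "is_unit E zero infty e"
begin

abbreviation "\<tau> \<equiv> \<mu> e"

lemma tau_in_G: "\<tau> \<in> G"
  using mu_in_G unit_e by blast

lemma tau_bij: "bij \<tau>"
  using mu_bij unit_e by blast

lemma tau_zero: "\<tau> zero = infty" and tau_infty: "\<tau> infty = zero"
  using mu_swaps unit_e by auto

lemma tau_tau_in_Hua: "\<tau> \<circ> \<tau> \<in> H"
  using Hua_mu_mu unit_e by blast

lemma inv_tau_mu_in_Hua:
  assumes "unit x"
  shows "inv \<tau> \<circ> \<mu> x \<in> H"
proof -
  have "inv \<tau> \<circ> \<mu> x = inv (\<tau> \<circ> \<tau>) \<circ> (\<tau> \<circ> \<mu> x)"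
    using tau_bij by (simp add: o_inv_distrib fun_eq_iff)
  then show ?thesis
    using Hua_comp Hua_inv[OF tau_tau_in_Hua] Hua_mu_mu[OF assms unit_e] by metis
qed

(* The product g h of the right action is the composition h \<circ> g, so the cells consist of the
   maps v \<circ> b and w \<circ> \<tau> \<circ> b. *)
definition Bruhat :: "('a \<Rightarrow> 'a) set" where
  "Bruhat = setmul B (U infty) \<union> setmul (setmul B {\<tau>}) (Ucirc E U zero)"

lemma Bruhat_big_cellI: "b \<in> B \<Longrightarrow> v \<in> U infty \<Longrightarrow> v \<circ> b \<in> Bruhat"
  unfolding Bruhat_def by (rule UnI1, rule setmulI)

lemma Bruhat_small_cellI:
  assumes "b \<in> B" and "w \<in> Ucirc E U zero"
  shows "w \<circ> \<tau> \<circ> b \<in> Bruhat"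
proof -
  have "\<tau> \<circ> b \<in> setmul B {\<tau>}" using assms(1) by (rule setmulI) simp
  then have "w \<circ> (\<tau> \<circ> b) \<in> setmul (setmul B {\<tau>}) (Ucirc E U zero)"
    using assms(2) by (rule setmulI)
  then show ?thesis unfolding Bruhat_def by (simp add: o_assoc)
qed

lemma BruhatE:
  assumes "s \<in> Bruhat"
  obtains (big) b v where "b \<in> B" "v \<in> U infty" "s = v \<circ> b"
  | (small) b w where "b \<in> B" "w \<in> Ucirc E U zero" "s = w \<circ> \<tau> \<circ> b"
  using assms unfolding Bruhat_def
proof
  assume "s \<in> setmul B (U infty)"
  then show thesis by (rule setmulE) (rule big)
next
  assume "s \<in> setmul (setmul B {\<tau>}) (Ucirc E U zero)"
  then obtain c w where c: "c \<in> setmul B {\<tau>}" and w: "w \<in> Ucirc E U zero" and s: "s = w \<circ> c"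
    by (rule setmulE)
  from c obtain b where "b \<in> B" "c = \<tau> \<circ> b" by (rule setmulE) simp
  then show thesis using small w s by (simp add: o_assoc)
qed

lemma Bruhat_comp_B:
  assumes "s \<in> Bruhat" and "b \<in> B"
  shows "s \<circ> b \<in> Bruhat"
  using assms(1)
proof (cases rule: BruhatE)
  case (big b' v)
  then have "s \<circ> b = v \<circ> (b' \<circ> b)" by (simp add: comp_assoc)
  then show ?thesis using Bruhat_big_cellI[OF B_comp[OF assms(2) big(1)] big(2)] by simp
next
  case (small b' w)
  then have "s \<circ> b = w \<circ> \<tau> \<circ> (b' \<circ> b)" by (simp add: comp_assoc)
  then show ?thesis using Bruhat_small_cellI[OF B_comp[OF assms(2) small(1)] small(2)] by simp
qed

lemma root_infty_subset_Bruhat: "U infty \<subseteq> Bruhat"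
proof
  fix v assume "v \<in> U infty"
  then show "v \<in> Bruhat" using Bruhat_big_cellI[OF id_in_B] by (metis comp_id)
qed

lemma Ucirc_subset_root_zero: "Ucirc E U zero \<subseteq> U zero"
  by (auto simp: Ucirc_def)

lemma Bruhat_subset_G: "Bruhat \<subseteq> G"
proof
  fix s assume "s \<in> Bruhat"
  then show "s \<in> G"
  proof (cases rule: BruhatE)
    case (big b v)
    then show ?thesis using B_subset_G root_in_G[OF big(2)] G_comp by blast
  next
    case (small b w)
    have "w \<in> G" using small(2) Ucirc_subset_root_zero root_in_G by blast
    then have "w \<circ> \<tau> \<in> G" using G_comp[OF tau_in_G] by blast
    then show ?thesis using small(1,3) B_subset_G G_comp by blast
  qed
qed

lemma root_infty_eq_root_tau_B:
  assumes "v \<in> U infty" and "\<not> E (v zero) zero"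
  obtains a c where "a \<in> U zero" "c \<in> B" "v = a \<circ> \<tau> \<circ> c"
proof -
  define x where "x = v zero"
  have x: "\<not> E x zero" "unit x" using assms unit_root_infty by (simp_all add: x_def)
  obtain a b where ab: "a \<in> U zero" "b \<in> U zero" "v = b \<circ> \<mu> x \<circ> a"
    using root_infty_eq_root_mu_root[OF assms(1) x_def[symmetric] x(1)] by metis
  have "v = b \<circ> \<tau> \<circ> ((inv \<tau> \<circ> \<mu> x) \<circ> a)"
    using ab(3) tau_bij by (simp add: fun_eq_iff)
  moreover have "(inv \<tau> \<circ> \<mu> x) \<circ> a \<in> B"
    using inv_tau_mu_in_Hua[OF x(2)] ab(1) mem_B_iff by blast
  ultimately show thesis using that ab(2) by blast
qed

lemma conj_tau_root_infty_in_Ucirc: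
  assumes "v \<in> U infty" and "E (v zero) zero"
  shows "\<tau> \<circ> v \<circ> inv \<tau> \<in> Ucirc E U zero"
proof (rule Ucirc_intro)
  show "\<tau> \<circ> v \<circ> inv \<tau> \<in> U zero" using conj_root[OF tau_in_G tau_infty assms(1)] .
  have "E (\<tau> (v zero)) (\<tau> zero)" using G_preserves_E[OF tau_in_G] assms(2) by blast
  moreover have "inv \<tau> infty = zero" using tau_bij tau_zero by (metis bij_inv_apply)
  ultimately show "E ((\<tau> \<circ> v \<circ> inv \<tau>) infty) infty" by (simp add: tau_zero)
qed

lemma tau_root_infty_in_Bruhat:
  assumes "v \<in> U infty"
  shows "\<tau> \<circ> v \<in> Bruhat"
proof (cases "E (v zero) zero")
  case True
  have "\<tau> \<circ> v = (\<tau> \<circ> v \<circ> inv \<tau>) \<circ> \<tau> \<circ> id" using tau_bij by (simp add: fun_eq_iff)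
  also have "\<dots> \<in> Bruhat"
    using Bruhat_small_cellI[OF id_in_B conj_tau_root_infty_in_Ucirc[OF assms True]] .
  finally show ?thesis .
next
  case False
  obtain a c where ac: "a \<in> U zero" "c \<in> B" "v = a \<circ> \<tau> \<circ> c"
    using root_infty_eq_root_tau_B[OF assms False] .
  have "\<tau> \<circ> v = (\<tau> \<circ> a \<circ> inv \<tau>) \<circ> ((\<tau> \<circ> \<tau>) \<circ> c)"
    using ac(3) tau_bij by (simp add: fun_eq_iff)
  moreover have "\<tau> \<circ> a \<circ> inv \<tau> \<in> U infty" using conj_root[OF tau_in_G tau_zero ac(1)] .
  moreover have "(\<tau> \<circ> \<tau>) \<circ> c \<in> B" using B_comp[OF ac(2)] tau_tau_in_Hua Hua_subset_B by blast
  ultimately show ?thesis using Bruhat_big_cellI by simp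
qed

lemma Bruhat_tau_closed:
  assumes "s \<in> Bruhat"
  shows "\<tau> \<circ> s \<in> Bruhat"
  using assms
proof (cases rule: BruhatE)
  case (big b v)
  then have "\<tau> \<circ> s = (\<tau> \<circ> v) \<circ> b" by (simp add: comp_assoc)
  then show ?thesis using Bruhat_comp_B[OF tau_root_infty_in_Bruhat[OF big(2)] big(1)] by simp
next
  case (small b w)
  have "\<tau> \<circ> s = (\<tau> \<circ> w \<circ> inv \<tau>) \<circ> ((\<tau> \<circ> \<tau>) \<circ> b)"
    using small(3) tau_bij by (simp add: fun_eq_iff)
  moreover have "\<tau> \<circ> w \<circ> inv \<tau> \<in> U infty"
    using conj_root[OF tau_in_G tau_zero] small(2) Ucirc_subset_root_zero by blast
  moreover have "(\<tau> \<circ> \<tau>) \<circ> b \<in> B" using B_comp[OF small(1)] tau_tau_in_Hua Hua_subset_B by blast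
  ultimately show ?thesis using Bruhat_big_cellI by simp
qed

lemma root_zero_tau_in_Bruhat:
  assumes "a \<in> U zero"
  shows "a \<circ> \<tau> \<in> Bruhat"
proof -
  have "a \<circ> \<tau> = \<tau> \<circ> (inv \<tau> \<circ> a \<circ> \<tau>)" using tau_bij by (simp add: fun_eq_iff)
  moreover have "inv \<tau> \<circ> a \<circ> \<tau> \<in> Bruhat"
    using conj_root_inv[OF tau_in_G tau_infty assms] root_infty_subset_Bruhat by blast
  ultimately show ?thesis using Bruhat_tau_closed by simp
qed

lemma root_zero_root_infty_in_Bruhat_not_E:
  assumes "a \<in> U zero" and "v \<in> U infty" and "\<not> E (v zero) zero"
  shows "a \<circ> v \<in> Bruhat"
proof -
  obtain b c where bc: "b \<in> U zero" "c \<in> B" "v = b \<circ> \<tau> \<circ> c"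
    using root_infty_eq_root_tau_B[OF assms(2,3)] .
  have "a \<circ> v = ((a \<circ> b) \<circ> \<tau>) \<circ> c" using bc(3) by (simp add: comp_assoc)
  moreover have "(a \<circ> b) \<circ> \<tau> \<in> Bruhat"
    using root_zero_tau_in_Bruhat root_comp assms(1) bc(1) by blast
  ultimately show ?thesis using Bruhat_comp_B bc(2) by simp
qed

lemma big_cell_subset_Bruhat: "setmul B (U infty) \<subseteq> Bruhat"
  unfolding Bruhat_def by blast

lemma root_zero_root_infty_in_Bruhat:
  assumes a: "a \<in> U zero" and v: "v \<in> U infty"
  shows "a \<circ> v \<in> Bruhat"
proof (cases "E (v zero) zero")
  case False
  then show ?thesis using root_zero_root_infty_in_Bruhat_not_E a v by blast
next
  case v_zero: True
  show ?thesis
  proof (cases "E (inv a infty) infty")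
    case False
    then show ?thesis
      using root_zero_root_infty_in_big_cell[OF a v v_zero] big_cell_subset_Bruhat by blast
  next
    case a_infty: True
    (* Split a = (a \<circ> u) \<circ> u\<inverse> with u(\<infinity>) = e: both factors then move \<infinity> out of its class. *)
    have e: "\<not> E zero e" "\<not> E e infty" using unit_e E_sym by (auto simp: is_unit_def)
    obtain u where u: "u \<in> U zero" "u infty = e"
      using root_sharply_transitive[OF basis e(1)] by blast
    have "\<not> E (inv u infty) infty"
    proof
      assume "E (inv u infty) infty"
      then have "E (u (inv u infty)) (u infty)" using root_preserves_E[OF u(1)] by blast
      then show False using u e(2) root_bij[OF u(1)] E_sym by simp
    qed
    moreover have "\<not> E (inv (inv u) infty) infty" using u e(2) root_bij[OF u(1)] by (simp add: inv_inv_eq)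
    ultimately have "inv u \<circ> v \<in> setmul B (U infty)"
      using root_zero_root_infty_in_big_cell[OF root_inv[OF u(1)] v v_zero] by blast
    then obtain b v' where b: "b \<in> B" and v': "v' \<in> U infty" and uv: "inv u \<circ> v = v' \<circ> b"
      by (rule setmulE)
    have "a \<circ> v = ((a \<circ> u) \<circ> v') \<circ> b"
      using uv[THEN arg_cong[where f = "(\<circ>) u"]] root_bij[OF u(1)] by (simp add: fun_eq_iff)
    moreover have "(a \<circ> u) \<circ> v' \<in> Bruhat"
    proof (cases "E (v' zero) zero")
      case False
      then show ?thesis using root_zero_root_infty_in_Bruhat_not_E root_comp a u(1) v' by blast
    next
      case True
      have "E (inv u (inv a infty)) (inv u infty)" using root_preserves_E[OF root_inv[OF u(1)]] a_infty by blast
      then have "\<not> E (inv u (inv a infty)) infty"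
        using \<open>\<not> E (inv u infty) infty\<close> E_trans E_sym by blast
      moreover have "inv (a \<circ> u) = inv u \<circ> inv a"
        using root_bij[OF a] root_bij[OF u(1)] by (simp add: o_inv_distrib)
      ultimately have "\<not> E (inv (a \<circ> u) infty) infty" by simp
      then show ?thesis
        using root_zero_root_infty_in_big_cell[OF root_comp[OF u(1) a] v' True] big_cell_subset_Bruhat
        by blast
    qed
    ultimately show ?thesis using Bruhat_comp_B b by simp
  qed
qed

lemma Bruhat_root_infty_closed:
  assumes v: "v \<in> U infty" and s: "s \<in> Bruhat"
  shows "v \<circ> s \<in> Bruhat"
  using s
proof (cases rule: BruhatE)
  case (big b v')
  then have "v \<circ> s = (v \<circ> v') \<circ> b" by (simp add: comp_assoc)
  then show ?thesis using Bruhat_big_cellI[OF big(1) root_comp[OF big(2) v]] by simp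
next
  case (small b w)
  let ?a = "inv \<tau> \<circ> v \<circ> \<tau>" and ?v = "inv \<tau> \<circ> w \<circ> \<tau>"
  have "v \<circ> s = (\<tau> \<circ> (?a \<circ> ?v)) \<circ> b"
    using small(3) tau_bij by (simp add: fun_eq_iff)
  moreover have "?a \<in> U zero" using conj_root_inv[OF tau_in_G tau_zero v] .
  moreover have "?v \<in> U infty"
    using conj_root_inv[OF tau_in_G tau_infty] small(2) Ucirc_subset_root_zero by blast
  ultimately show ?thesis
    using Bruhat_comp_B[OF Bruhat_tau_closed[OF root_zero_root_infty_in_Bruhat] small(1)] by simp
qed

lemma Bruhat_root_zero_closed:
  assumes a: "a \<in> U zero" and s: "s \<in> Bruhat"
  shows "a \<circ> s \<in> Bruhat"
  using s
proof (cases rule: BruhatE)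
  case (big b v)
  then have "a \<circ> s = (a \<circ> v) \<circ> b" by (simp add: comp_assoc)
  then show ?thesis using Bruhat_comp_B[OF root_zero_root_infty_in_Bruhat[OF a big(2)] big(1)] by simp
next
  case (small b w)
  then have "a \<circ> s = ((a \<circ> w) \<circ> \<tau>) \<circ> b" by (simp add: comp_assoc)
  moreover have "a \<circ> w \<in> U zero" using root_comp a small(2) Ucirc_subset_root_zero by blast
  ultimately show ?thesis using Bruhat_comp_B[OF root_zero_tau_in_Bruhat small(1)] by simp
qed

lemma Bruhat_root_closed:
  assumes t: "t \<in> U x" and s: "s \<in> Bruhat"
  shows "t \<circ> s \<in> Bruhat"
proof (cases "E x infty")
  case False
  note A = alpha_spec[OF False]
  have A_bij: "bij (\<alpha> x)" using root_bij[OF A(1)] .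
  have "inv (\<alpha> x) \<circ> t \<circ> \<alpha> x \<in> U zero" using conj_root_inv[OF root_in_G[OF A(1)] A(2) t] .
  moreover have "inv (\<alpha> x) \<circ> s \<in> Bruhat" using Bruhat_root_infty_closed root_inv A(1) s by blast
  ultimately have "\<alpha> x \<circ> ((inv (\<alpha> x) \<circ> t \<circ> \<alpha> x) \<circ> (inv (\<alpha> x) \<circ> s)) \<in> Bruhat"
    using Bruhat_root_infty_closed[OF A(1)] Bruhat_root_zero_closed by blast
  moreover have "t \<circ> s = \<alpha> x \<circ> ((inv (\<alpha> x) \<circ> t \<circ> \<alpha> x) \<circ> (inv (\<alpha> x) \<circ> s))"
    using A_bij by (simp add: fun_eq_iff)
  ultimately show ?thesis by simp
next
  case True
  have "\<not> E zero x" using True basis E_sym E_trans by blast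
  then obtain u where u: "u \<in> U zero" "u infty = x" using root_sharply_transitive[OF basis] by blast
  have u_bij: "bij u" using root_bij[OF u(1)] .
  have "inv u \<circ> t \<circ> u \<in> U infty" using conj_root_inv[OF root_in_G[OF u(1)] u(2) t] .
  moreover have "inv u \<circ> s \<in> Bruhat" using Bruhat_root_zero_closed root_inv u(1) s by blast
  ultimately have "u \<circ> ((inv u \<circ> t \<circ> u) \<circ> (inv u \<circ> s)) \<in> Bruhat"
    using Bruhat_root_zero_closed[OF u(1)] Bruhat_root_infty_closed by blast
  moreover have "t \<circ> s = u \<circ> ((inv u \<circ> t \<circ> u) \<circ> (inv u \<circ> s))"
    using u_bij by (simp add: fun_eq_iff)
  ultimately show ?thesis by simp
qed

lemma littleG_eq_Bruhat: "G = Bruhat"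
proof
  show "G \<subseteq> Bruhat"
  proof
    fix g assume "g \<in> G"
    then have "g \<circ> id \<in> Bruhat"
      using gen_group_left_closed[of "\<Union>x. U x" Bruhat] Bruhat_root_closed root_inv
        root_infty_subset_Bruhat root_id unfolding littleG_def by blast
    then show "g \<in> Bruhat" by simp
  qed
qed (rule Bruhat_subset_G)

lemma stabilizer_zero: "{g \<in> G. g zero = zero} = B"
proof
  show "{g \<in> G. g zero = zero} \<subseteq> B"
  proof clarify
    fix g assume g: "g \<in> G" "g zero = zero"
    then have "g \<in> Bruhat" using littleG_eq_Bruhat by blast
    then show "g \<in> B"
    proof (cases rule: BruhatE)
      case (big b v)
      then have "v zero = zero" using g(2) B_fixes_zero[OF big(1)] by simp
      then have "v = id" using root_eqI[OF infty_not_E_zero big(2) root_id] by simp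
      then show ?thesis using big by simp
    next
      case (small b w)
      have w: "w \<in> U zero" using small(2) Ucirc_subset_root_zero by blast
      have "w infty = w zero"
        using small(3) g(2) B_fixes_zero[OF small(1)] tau_zero root_fixes[OF w] by simp
      then show ?thesis using root_bij[OF w] basis by (metis bij_inv_apply E_refl)
    qed
  qed
qed (use B_subset_G B_fixes_zero in blast)

lemma stabilizer_zero_infty: "{g \<in> G. g zero = zero \<and> g infty = infty} = H"
proof
  show "{g \<in> G. g zero = zero \<and> g infty = infty} \<subseteq> H"
  proof clarify
    fix g assume g: "g \<in> G" "g zero = zero" "g infty = infty"
    then have "g \<in> B" using stabilizer_zero by blast
    then obtain a h where ah: "a \<in> U zero" "h \<in> H" "g = h \<circ> a" using mem_B_iff by blast
    then have "h (a infty) = h infty" using g(3) Hua_fixes(2)[OF ah(2)] by simp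
    then have "a infty = id infty" using Hua_bij[OF ah(2)] by (metis bij_inv_apply id_apply)
    then have "a = id" using root_eqI[OF basis ah(1) root_id] by simp
    then show "g \<in> H" using ah by simp
  qed
qed (use Hua_subset_G Hua_fixes in blast)

end

theorem mainTheorem6:
  fixes E :: "'a \<Rightarrow> 'a \<Rightarrow> bool" and U :: "'a \<Rightarrow> ('a \<Rightarrow> 'a) set"
    and zero infty e :: 'a
  assumes "local_moufang_set E U"
    and "\<not> E zero infty"
    and "is_unit E zero infty e"
  defines "\<tau> \<equiv> mu U zero infty e"
  shows "(littleG U =
           setmul (setmul (U zero) (Hua E U zero infty)) (U infty)
         \<union> setmul (setmul (setmul (U zero) (Hua E U zero infty)) {\<tau>}) (Ucirc E U zero))
       \<and> {g \<in> littleG U. g zero = zero} = setmul (U zero) (Hua E U zero infty)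
       \<and> {g \<in> littleG U. g zero = zero \<and> g infty = infty} = Hua E U zero infty"
proof -
  interpret local_moufang_basis_unit E U zero infty e
    using assms(1-3) by unfold_locales
  show ?thesis
    using littleG_eq_Bruhat stabilizer_zero stabilizer_zero_infty
    unfolding Bruhat_def B_def \<tau>_def by blast
qed

end
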